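(* Let $N, D \ge 1$, let $X \in \mathbb{R}^{N\times D}$ have rows $x_1,\ldots,x_N$, and let $\lambda^2 > 0$, $\rho^2 > 0$. For $\sigma^2 > 0$ set $\gamma = \exp(-\lambda^2/(2\sigma^2))$ and, for a feature allocation $(K^+, Z)$ and feature means $A \in \mathbb{R}^{K^+ \times D}$ (rows $\mu_1,\ldots,\mu_{K^+}$), define $$p(X,Z,A) = \frac{1}{(2\pi\sigma^2)^{ND/2}} \exp\Big\{-\frac{\operatorname{tr}((X-ZA)'(X-ZA))}{2\sigma^2}\Big\} \cdot \frac{\gamma^{K^+}\exp\{-\sum_{n=1}^N \gamma/n\}}{\prod_{h=1}^H \tilde K_h!} \prod_{k=1}^{K^+} S_{N,k}^{-1}\binom{N}{S_{N,k}}^{-1} \cdot \prod_{k=1}^{K^+} \mathcal{N}(\mu_k \mid 0, \rho^2 I_D).$$ Then for fixed $K^+, Z, A$, as $\sigma^2 \to 0$, $$-2\sigma^2 \log p(X,Z,A) \sim \operatorname{tr}\big[(X-ZA)'(X-ZA)\big] + K^+ \lambda^2,$$ and consequently finding the MAP estimate of $(K^+, Z, A)$ is asymptotically equivalent to solving $\operatorname{argmin}_{K^+, Z, A} \operatorname{tr}[(X-ZA)'(X-ZA)] + K^+\lambda^2$.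
   Context: A feature allocation consists of an integer $K^+ \ge 0$ and a binary matrix $Z = (z_{nk}) \in \{0,1\}^{N \times K^+}$ each of whose columns is nonzero (a data index may belong to any number of features, including none). $S_{N,k} = \sum_n z_{nk}$; $H$ is the number of distinct column vectors among the columns of $Z$, and $\tilde K_h$ is the number of columns equal to the $h$-th distinct column. The middle factor is the Indian buffet process probability of $Z$ with mass parameter $\gamma$. $\mathcal{N}(\cdot\mid m,\Sigma)$ is the Gaussian density. $f(\sigma^2)\sim g(\sigma^2)$ means $f(\sigma^2)/g(\sigma^2)\to 1$ as $\sigma^2 \to 0$. *)

theory Defs
  imports Complex_Main "HOL-Library.Landau_Symbols"
begin

text \<open>Matrices are represented by functions nat => nat => real with explicit
  (0-based) index bounds: X is N x D, Z is N x K, A is K x D.\<close>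

definition is_feature_allocation :: "nat \<Rightarrow> nat \<Rightarrow> (nat \<Rightarrow> nat \<Rightarrow> real) \<Rightarrow> bool" where
  "is_feature_allocation N K Z \<longleftrightarrow>
     (\<forall>n<N. \<forall>k<K. Z n k = 0 \<or> Z n k = 1) \<and> (\<forall>k<K. \<exists>n<N. Z n k \<noteq> 0)"

definition col :: "nat \<Rightarrow> (nat \<Rightarrow> nat \<Rightarrow> real) \<Rightarrow> nat \<Rightarrow> nat \<Rightarrow> real" where
  "col N Z k = (\<lambda>n. if n < N then Z n k else 0)"

definition S_col :: "nat \<Rightarrow> (nat \<Rightarrow> nat \<Rightarrow> real) \<Rightarrow> nat \<Rightarrow> nat" where
  "S_col N Z k = card {n. n < N \<and> Z n k = 1}"

text \<open>Product over the H distinct columns of (multiplicity of that column)!.\<close>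
definition dup_fact_prod :: "nat \<Rightarrow> nat \<Rightarrow> (nat \<Rightarrow> nat \<Rightarrow> real) \<Rightarrow> real" where
  "dup_fact_prod N K Z =
     (\<Prod>c\<in>col N Z ` {..<K}. real (fact (card {k. k < K \<and> col N Z k = c})))"

definition ibp_prob :: "real \<Rightarrow> nat \<Rightarrow> nat \<Rightarrow> (nat \<Rightarrow> nat \<Rightarrow> real) \<Rightarrow> real" where
  "ibp_prob \<gamma> N K Z =
     \<gamma> ^ K * exp (- (\<Sum>n=1..N. \<gamma> / real n)) / dup_fact_prod N K Z *
     (\<Prod>k<K. 1 / (real (S_col N Z k) * real (N choose S_col N Z k)))"

definition trace_res :: "nat \<Rightarrow> nat \<Rightarrow> nat \<Rightarrow> (nat \<Rightarrow> nat \<Rightarrow> real) \<Rightarrow> (nat \<Rightarrow> nat \<Rightarrow> real)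
    \<Rightarrow> (nat \<Rightarrow> nat \<Rightarrow> real) \<Rightarrow> real" where
  "trace_res N D K X Z A = (\<Sum>n<N. \<Sum>d<D. (X n d - (\<Sum>k<K. Z n k * A k d))\<^sup>2)"

definition gauss_iso :: "nat \<Rightarrow> real \<Rightarrow> (nat \<Rightarrow> real) \<Rightarrow> real" where
  "gauss_iso D \<rho>2 \<mu> = (2 * pi * \<rho>2) powr (- real D / 2) * exp (- (\<Sum>d<D. (\<mu> d)\<^sup>2) / (2 * \<rho>2))"

definition joint_p :: "nat \<Rightarrow> nat \<Rightarrow> real \<Rightarrow> real \<Rightarrow> real \<Rightarrow> (nat \<Rightarrow> nat \<Rightarrow> real) \<Rightarrow> nat
    \<Rightarrow> (nat \<Rightarrow> nat \<Rightarrow> real) \<Rightarrow> (nat \<Rightarrow> nat \<Rightarrow> real) \<Rightarrow> real" where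
  "joint_p N D lam2 \<rho>2 \<sigma>2 X K Z A =
     (let \<gamma> = exp (- lam2 / (2 * \<sigma>2)) in
      1 / (2 * pi * \<sigma>2) powr (real (N * D) / 2) * exp (- trace_res N D K X Z A / (2 * \<sigma>2))
      * ibp_prob \<gamma> N K Z
      * (\<Prod>k<K. gauss_iso D \<rho>2 (\<lambda>d. A k d)))"

end

theory Submission
  imports Defs "HOL-Real_Asymp.Real_Asymp"
begin

text \<open>Taking logarithms, \<open>-2\<sigma>\<^sup>2 log p\<close> splits into the residual trace, the term \<open>K\<^sup>+\<lambda>\<^sup>2\<close>
  coming from \<open>\<gamma>\<^sup>K\<^sup>+\<close>, and a remainder \<open>\<sigma>\<^sup>2 (ND log(2\<pi>\<sigma>\<^sup>2) + 2\<gamma>H\<^sub>N + const)\<close>, which tends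
  to \<open>0\<close> as \<open>\<sigma>\<^sup>2 \<rightarrow> 0\<close> because \<open>\<sigma>\<^sup>2 log \<sigma>\<^sup>2 \<rightarrow> 0\<close> and \<open>\<gamma> \<rightarrow> 0\<close>. So \<open>-2\<sigma>\<^sup>2 log p\<close> converges to
  the nonzero constant \<open>tr((X-ZA)'(X-ZA)) + K\<^sup>+\<lambda>\<^sup>2\<close> and is therefore asymptotically equivalent
  to it.\<close>

definition ibp_weight :: "nat \<Rightarrow> nat \<Rightarrow> (nat \<Rightarrow> nat \<Rightarrow> real) \<Rightarrow> real" where
  "ibp_weight N K Z =
     (\<Prod>k<K. 1 / (real (S_col N Z k) * real (N choose S_col N Z k))) / dup_fact_prod N K Z"

lemma ibp_prob_eq_ibp_weight:
  "ibp_prob \<gamma> N K Z = \<gamma> ^ K * exp (- \<gamma> * (\<Sum>n=1..N. 1 / real n)) * ibp_weight N K Z"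
  unfolding ibp_prob_def ibp_weight_def by (simp add: sum_distrib_left sum_negf)

lemma S_col_bounds:
  assumes "is_feature_allocation N K Z" and "k < K"
  shows "1 \<le> S_col N Z k" and "S_col N Z k \<le> N"
proof -
  have sub: "{n. n < N \<and> Z n k = 1} \<subseteq> {..<N}" by auto
  obtain n where "n < N" "Z n k = 1"
    using assms unfolding is_feature_allocation_def by blast
  then have "{n. n < N \<and> Z n k = 1} \<noteq> {}" by blast
  with finite_subset[OF sub] show "1 \<le> S_col N Z k"
    unfolding S_col_def by (simp add: Suc_le_eq card_gt_0_iff)
  show "S_col N Z k \<le> N"
    unfolding S_col_def using card_mono[OF _ sub] by simp
qed

lemma dup_fact_prod_pos: "dup_fact_prod N K Z > 0"
  unfolding dup_fact_prod_def by (rule prod_pos) simp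

lemma ibp_weight_pos:
  assumes "is_feature_allocation N K Z"
  shows "ibp_weight N K Z > 0"
proof -
  have "(\<Prod>k<K. 1 / (real (S_col N Z k) * real (N choose S_col N Z k))) > 0"
  proof (rule prod_pos)
    fix k assume "k \<in> {..<K}"
    with S_col_bounds[OF assms] have "1 \<le> S_col N Z k" "S_col N Z k \<le> N" by auto
    then show "0 < 1 / (real (S_col N Z k) * real (N choose S_col N Z k))"
      by (simp add: zero_less_binomial)
  qed
  then show ?thesis
    unfolding ibp_weight_def using dup_fact_prod_pos by simp
qed

lemma gauss_iso_pos: "\<rho>2 > 0 \<Longrightarrow> gauss_iso D \<rho>2 \<mu> > 0"
  unfolding gauss_iso_def by simp

lemma neg_two_sigma2_ln_joint_p:
  fixes \<sigma>2 :: real and D :: nat and A :: "nat \<Rightarrow> nat \<Rightarrow> real"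
  assumes alloc: "is_feature_allocation N K Z" and "\<rho>2 > 0" and \<sigma>2: "\<sigma>2 > 0"
  defines "c \<equiv> ln (ibp_weight N K Z * (\<Prod>k<K. gauss_iso D \<rho>2 (\<lambda>d. A k d)))"
  shows "- 2 * \<sigma>2 * ln (joint_p N D lam2 \<rho>2 \<sigma>2 X K Z A)
    = trace_res N D K X Z A + real K * lam2
      + \<sigma>2 * (real (N * D) * ln (2 * pi * \<sigma>2)
               + 2 * exp (- lam2 / (2 * \<sigma>2)) * (\<Sum>n=1..N. 1 / real n) - 2 * c)"
proof -
  define \<gamma> where "\<gamma> = exp (- lam2 / (2 * \<sigma>2))"
  define H where "H = (\<Sum>n=1..N. 1 / real n)"
  define W where "W = ibp_weight N K Z * (\<Prod>k<K. gauss_iso D \<rho>2 (\<lambda>d. A k d))"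
  have W_pos: "W > 0"
    unfolding W_def using ibp_weight_pos[OF alloc] gauss_iso_pos[OF \<open>\<rho>2 > 0\<close>]
    by (simp add: prod_pos)
  have "joint_p N D lam2 \<rho>2 \<sigma>2 X K Z A
      = exp (- trace_res N D K X Z A / (2 * \<sigma>2)) * \<gamma> ^ K * exp (- \<gamma> * H) * W
        / (2 * pi * \<sigma>2) powr (real (N * D) / 2)"
    unfolding joint_p_def ibp_prob_eq_ibp_weight \<gamma>_def H_def W_def Let_def by simp
  then have "ln (joint_p N D lam2 \<rho>2 \<sigma>2 X K Z A)
      = - trace_res N D K X Z A / (2 * \<sigma>2) + real K * (- lam2 / (2 * \<sigma>2)) - \<gamma> * H + ln W
        - real (N * D) / 2 * ln (2 * pi * \<sigma>2)"
    using \<sigma>2 W_pos by (simp add: ln_mult ln_div ln_powr ln_realpow \<gamma>_def)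
  then show ?thesis
    using \<sigma>2 unfolding c_def W_def[symmetric] \<gamma>_def H_def by (simp add: field_simps)
qed

lemma sigma2_remainder_tendsto_zero:
  fixes lam2 a b c :: real
  assumes "lam2 > 0"
  shows "((\<lambda>\<sigma>2. \<sigma>2 * (a * ln (2 * pi * \<sigma>2) + b * exp (- lam2 / (2 * \<sigma>2)) - c))
           \<longlongrightarrow> 0) (at_right 0)"
  using assms by real_asymp

theorem mainTheorem3:
  fixes N D K :: nat and lam2 \<rho>2 :: real and X Z A :: "nat \<Rightarrow> nat \<Rightarrow> real"
  assumes "N \<ge> 1" and "D \<ge> 1" and "lam2 > 0" and "\<rho>2 > 0"
    and "is_feature_allocation N K Z"
    and "trace_res N D K X Z A + real K * lam2 \<noteq> 0"
  shows "(\<lambda>\<sigma>2. - 2 * \<sigma>2 * ln (joint_p N D lam2 \<rho>2 \<sigma>2 X K Z A))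
           \<sim>[at_right 0] (\<lambda>\<sigma>2. trace_res N D K X Z A + real K * lam2)"
proof -
  define L where "L = trace_res N D K X Z A + real K * lam2"
  define c where "c = ln (ibp_weight N K Z * (\<Prod>k<K. gauss_iso D \<rho>2 (\<lambda>d. A k d)))"
  define H where "H = (\<Sum>n=1..N. 1 / real n)"
  have "\<forall>\<^sub>F \<sigma>2 in at_right 0.
      L + \<sigma>2 * (real (N * D) * ln (2 * pi * \<sigma>2) + 2 * H * exp (- lam2 / (2 * \<sigma>2)) - 2 * c)
      = - 2 * \<sigma>2 * ln (joint_p N D lam2 \<rho>2 \<sigma>2 X K Z A)"
    using eventually_at_right_less
  proof eventually_elim
    case (elim \<sigma>2)
    show ?case
      unfolding neg_two_sigma2_ln_joint_p[OF assms(5,4) elim] L_def c_def H_def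
      by (simp add: algebra_simps)
  qed
  moreover have "((\<lambda>\<sigma>2. L + \<sigma>2 * (real (N * D) * ln (2 * pi * \<sigma>2)
                     + 2 * H * exp (- lam2 / (2 * \<sigma>2)) - 2 * c)) \<longlongrightarrow> L + 0) (at_right 0)"
    using sigma2_remainder_tendsto_zero[OF assms(3), of "real (N * D)" "2 * H" "2 * c"]
    by (intro tendsto_add) auto
  ultimately have "((\<lambda>\<sigma>2. - 2 * \<sigma>2 * ln (joint_p N D lam2 \<rho>2 \<sigma>2 X K Z A)) \<longlongrightarrow> L) (at_right 0)"
    by (simp add: tendsto_cong)
  then show ?thesis
    unfolding L_def by (rule tendsto_imp_asymp_equiv_const) (use assms(6) in simp)
qed

end
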